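(* Let $x,y\in V(D^+)$ with $y\prec x$ and $y\in F$. Then $g(x,u)>g^*(y)$ for every $u\prec y$.
   Context: $G=(V,E,w)$ is a simple, connected, undirected graph with positive edge lengths, $s,t\in V$, $d(\cdot,\cdot)$ the shortest path distance in $G$. $D$ is the union of all shortest $st$-paths of $G$, and $D^+$ is the directed acyclic graph obtained from $D$ by orienting every edge toward $t$. $x\prec y$ means $x$ is an ancestor of $y$ in $D^+$ (a directed path of positive length from $x$ to $y$ exists). For $x\neq s$, $v\neq x$ is an $s$-dominator of $x$ if every directed path from $s$ to $x$ in $D^+$ contains $v$, and $I_s(x)$ is the $s$-dominator of $x$ closest to $x$ (every other $s$-dominator of $x$ is an $s$-dominator of $I_s(x)$). Symmetrically, for $x\neq t$, $v\neq x$ is a $t$-dominator of $x$ if every directed path from $x$ to $t$ in $D^+$ contains $v$, and $I_t(x)$ is the $t$-dominator closest to $x$. For $x\neq s$, $C(x)=\{v: I_s(x)\prec v\prec x\}$. For $x\neq s$ and $y\in V(D^+)$, $g(x,y)=d(y,x)$ if $y\in C(x)$ and $x\prec I_t(y)$, and $g(x,y)=\infty$ otherwise; $g^*(x)=\min_y g(x,y)$. $F=\{x\in V(D^+)\setminus\{s\}: g^*(x)\neq\infty\}$. *)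

theory Defs
  imports "HOL-Analysis.Analysis"
begin

definition simple_graph :: "'a set \<Rightarrow> 'a set set \<Rightarrow> bool" where
  "simple_graph V E \<longleftrightarrow> finite V \<and> (\<forall>e\<in>E. e \<subseteq> V \<and> card e = 2)"

definition walk :: "'a set \<Rightarrow> 'a set set \<Rightarrow> 'a list \<Rightarrow> bool" where
  "walk V E p \<longleftrightarrow> p \<noteq> [] \<and> set p \<subseteq> V \<and>
     (\<forall>i < length p - 1. {p ! i, p ! Suc i} \<in> E)"

definition walk_len :: "('a set \<Rightarrow> real) \<Rightarrow> 'a list \<Rightarrow> real" where
  "walk_len w p = (\<Sum>i < length p - 1. w {p ! i, p ! Suc i})"

definition connected_graph :: "'a set \<Rightarrow> 'a set set \<Rightarrow> bool" where
  "connected_graph V E \<longleftrightarrow> (\<forall>u\<in>V. \<forall>v\<in>V. \<exists>p. walk V E p \<and> hd p = u \<and> last p = v)"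

definition dist_G :: "'a set \<Rightarrow> 'a set set \<Rightarrow> ('a set \<Rightarrow> real) \<Rightarrow> 'a \<Rightarrow> 'a \<Rightarrow> real" where
  "dist_G V E w x y = Inf {walk_len w p | p. walk V E p \<and> hd p = x \<and> last p = y}"

definition shortest_path :: "'a set \<Rightarrow> 'a set set \<Rightarrow> ('a set \<Rightarrow> real) \<Rightarrow> 'a \<Rightarrow> 'a \<Rightarrow> 'a list \<Rightarrow> bool" where
  "shortest_path V E w s t p \<longleftrightarrow> walk V E p \<and> distinct p \<and> hd p = s \<and> last p = t \<and>
     walk_len w p = dist_G V E w s t"

definition DV :: "'a set \<Rightarrow> 'a set set \<Rightarrow> ('a set \<Rightarrow> real) \<Rightarrow> 'a \<Rightarrow> 'a \<Rightarrow> 'a set" where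
  "DV V E w s t = \<Union> {set p | p. shortest_path V E w s t p}"

definition Darcs :: "'a set \<Rightarrow> 'a set set \<Rightarrow> ('a set \<Rightarrow> real) \<Rightarrow> 'a \<Rightarrow> 'a \<Rightarrow> ('a \<times> 'a) set" where
  "Darcs V E w s t = {(p ! i, p ! Suc i) | p i. shortest_path V E w s t p \<and> i < length p - 1}"

definition prec :: "'a set \<Rightarrow> 'a set set \<Rightarrow> ('a set \<Rightarrow> real) \<Rightarrow> 'a \<Rightarrow> 'a \<Rightarrow> 'a \<Rightarrow> 'a \<Rightarrow> bool" where
  "prec V E w s t x y \<longleftrightarrow> (x, y) \<in> (Darcs V E w s t)\<^sup>+"

definition dpath :: "'a set \<Rightarrow> 'a set set \<Rightarrow> ('a set \<Rightarrow> real) \<Rightarrow> 'a \<Rightarrow> 'a \<Rightarrow> 'a list \<Rightarrow> 'a \<Rightarrow> 'a \<Rightarrow> bool" where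
  "dpath V E w s t q a b \<longleftrightarrow> q \<noteq> [] \<and> hd q = a \<and> last q = b \<and>
     (\<forall>i < length q - 1. (q ! i, q ! Suc i) \<in> Darcs V E w s t)"

definition sdom :: "'a set \<Rightarrow> 'a set set \<Rightarrow> ('a set \<Rightarrow> real) \<Rightarrow> 'a \<Rightarrow> 'a \<Rightarrow> 'a \<Rightarrow> 'a \<Rightarrow> bool" where
  "sdom V E w s t v x \<longleftrightarrow> v \<noteq> x \<and> (\<forall>q. dpath V E w s t q s x \<longrightarrow> v \<in> set q)"

definition tdom :: "'a set \<Rightarrow> 'a set set \<Rightarrow> ('a set \<Rightarrow> real) \<Rightarrow> 'a \<Rightarrow> 'a \<Rightarrow> 'a \<Rightarrow> 'a \<Rightarrow> bool" where
  "tdom V E w s t v x \<longleftrightarrow> v \<noteq> x \<and> (\<forall>q. dpath V E w s t q x t \<longrightarrow> v \<in> set q)"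

definition Is :: "'a set \<Rightarrow> 'a set set \<Rightarrow> ('a set \<Rightarrow> real) \<Rightarrow> 'a \<Rightarrow> 'a \<Rightarrow> 'a \<Rightarrow> 'a" where
  "Is V E w s t x = (THE v. sdom V E w s t v x \<and>
      (\<forall>u. sdom V E w s t u x \<and> u \<noteq> v \<longrightarrow> sdom V E w s t u v))"

definition It :: "'a set \<Rightarrow> 'a set set \<Rightarrow> ('a set \<Rightarrow> real) \<Rightarrow> 'a \<Rightarrow> 'a \<Rightarrow> 'a \<Rightarrow> 'a" where
  "It V E w s t x = (THE v. tdom V E w s t v x \<and>
      (\<forall>u. tdom V E w s t u x \<and> u \<noteq> v \<longrightarrow> tdom V E w s t u v))"

definition Cset :: "'a set \<Rightarrow> 'a set set \<Rightarrow> ('a set \<Rightarrow> real) \<Rightarrow> 'a \<Rightarrow> 'a \<Rightarrow> 'a \<Rightarrow> 'a set" where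
  "Cset V E w s t x = {v. prec V E w s t (Is V E w s t x) v \<and> prec V E w s t v x}"

definition gfun :: "'a set \<Rightarrow> 'a set set \<Rightarrow> ('a set \<Rightarrow> real) \<Rightarrow> 'a \<Rightarrow> 'a \<Rightarrow> 'a \<Rightarrow> 'a \<Rightarrow> ereal" where
  "gfun V E w s t x y =
     (if y \<in> Cset V E w s t x \<and> prec V E w s t x (It V E w s t y)
      then ereal (dist_G V E w y x) else \<infinity>)"

definition gstar :: "'a set \<Rightarrow> 'a set set \<Rightarrow> ('a set \<Rightarrow> real) \<Rightarrow> 'a \<Rightarrow> 'a \<Rightarrow> 'a \<Rightarrow> ereal" where
  "gstar V E w s t x = (INF y\<in>DV V E w s t. gfun V E w s t x y)"

definition Fset :: "'a set \<Rightarrow> 'a set set \<Rightarrow> ('a set \<Rightarrow> real) \<Rightarrow> 'a \<Rightarrow> 'a \<Rightarrow> 'a set" where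
  "Fset V E w s t = {x \<in> DV V E w s t - {s}. gstar V E w s t x \<noteq> \<infinity>}"

end

theory Submission
  imports Defs
begin

text \<open>
  Along every arc of \<open>D\<^sup>+\<close> the distance from \<open>s\<close> grows by the arc length, so \<open>u \<prec> v\<close>
  implies \<open>d(s,u) < d(s,v)\<close> and \<open>d(u,v) \<le> d(s,v) - d(s,u)\<close>. For \<open>u \<prec> y \<prec> x\<close> with
  \<open>g(x,u)\<close> finite this gives \<open>g(x,u) = d(u,x) \<ge> d(s,x) - d(s,u) > d(s,y) - d(s,u)\<close>, and it
  remains to bound \<open>g\<^sup>*(y) \<le> d(s,y) - d(s,u)\<close>. If \<open>u \<in> C(y)\<close>, then \<open>g(y,u) = d(u,y)\<close> is
  finite because \<open>y \<prec> x \<prec> I\<^sub>t(u)\<close>. Otherwise \<open>I\<^sub>s(y) \<nprec> u\<close>; as \<open>I\<^sub>s(y)\<close> lies on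
  every path \<open>s \<leadsto> u \<leadsto> y\<close>, it is \<open>u\<close> or a descendant of \<open>u\<close>, and any \<open>z\<close> with \<open>g(y,z)\<close>
  finite (there is one since \<open>y \<in> F\<close>) satisfies \<open>I\<^sub>s(y) \<prec> z \<prec> y\<close>, whence
  \<open>g\<^sup>*(y) \<le> d(z,y) \<le> d(s,y) - d(s,z) < d(s,y) - d(s,u)\<close>.
\<close>

lemma walk_Cons:
  assumes "p \<noteq> []"
  shows "walk V E (a # p) \<longleftrightarrow> a \<in> V \<and> {a, hd p} \<in> E \<and> walk V E p"
proof -
  obtain n where n: "length p = Suc n" using assms by (cases p) auto
  have "(\<forall>i<Suc n. {(a#p) ! i, (a#p) ! Suc i} \<in> E) \<longleftrightarrow>
        {a, p ! 0} \<in> E \<and> (\<forall>i<n. {p ! i, p ! Suc i} \<in> E)"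
    unfolding All_less_Suc2 by simp
  then show ?thesis using assms by (auto simp: walk_def n hd_conv_nth)
qed

lemma walk_single [simp]: "walk V E [a] \<longleftrightarrow> a \<in> V"
  by (simp add: walk_def)

lemma walk_len_single [simp]: "walk_len w [a] = 0"
  by (simp add: walk_len_def)

lemma walk_len_Cons:
  assumes "p \<noteq> []"
  shows "walk_len w (a # p) = w {a, hd p} + walk_len w p"
proof -
  obtain n where n: "length p = Suc n" using assms by (cases p) auto
  have "walk_len w (a # p) = (\<Sum>i<Suc n. w {(a#p) ! i, (a#p) ! Suc i})"
    by (simp add: walk_len_def n)
  also have "\<dots> = w {a, p ! 0} + (\<Sum>i<n. w {p ! i, p ! Suc i})"
    unfolding sum.lessThan_Suc_shift by simp
  finally show ?thesis using assms by (simp add: walk_len_def n hd_conv_nth)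
qed

lemma walk_len_take:
  "i < length p \<Longrightarrow> walk_len w (take (Suc i) p) = (\<Sum>j<i. w {p ! j, p ! Suc j})"
  unfolding walk_len_def by (intro sum.cong) auto

lemma walk_take: "walk V E p \<Longrightarrow> 0 < n \<Longrightarrow> walk V E (take n p)"
  unfolding walk_def using set_take_subset[of n p] by auto

lemma walk_drop: "walk V E p \<Longrightarrow> n < length p \<Longrightarrow> walk V E (drop n p)"
  unfolding walk_def using set_drop_subset[of n p] by auto

lemma walk_append:
  assumes "walk V E p" "walk V E q" "last p = hd q"
  shows "walk V E (p @ tl q)" "walk_len w (p @ tl q) = walk_len w p + walk_len w q"
    "hd (p @ tl q) = hd p" "last (p @ tl q) = last q"
proof -
  have "walk V E (p @ tl q) \<and> walk_len w (p @ tl q) = walk_len w p + walk_len w q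
     \<and> hd (p @ tl q) = hd p \<and> last (p @ tl q) = last q"
    using assms
  proof (induction p)
    case Nil
    then show ?case by (simp add: walk_def)
  next
    case (Cons a p)
    have "q \<noteq> []" using Cons.prems by (simp add: walk_def)
    show ?case
    proof (cases "p = []")
      case True
      then have "[a] @ tl q = q" using Cons.prems \<open>q \<noteq> []\<close> by (cases q) auto
      then show ?thesis using True Cons.prems by simp
    next
      case False
      have a: "a \<in> V" "{a, hd p} \<in> E" and "walk V E p"
        using walk_Cons[OF False] Cons.prems(1) by simp_all
      then have IH: "walk V E (p @ tl q)" "walk_len w (p @ tl q) = walk_len w p + walk_len w q"
          "hd (p @ tl q) = hd p" "last (p @ tl q) = last q"
        using Cons.IH Cons.prems False by simp_all
      have "p @ tl q \<noteq> []" using False by simp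
      then show ?thesis
        using False IH a walk_Cons[of "p @ tl q" V E a] walk_len_Cons[of "p @ tl q" w a]
          walk_len_Cons[OF False, of w a] by simp
    qed
  qed
  then show "walk V E (p @ tl q)" "walk_len w (p @ tl q) = walk_len w p + walk_len w q"
    "hd (p @ tl q) = hd p" "last (p @ tl q) = last q" by simp_all
qed

lemma dpath_single [simp]: "dpath V E w s t [a] b c \<longleftrightarrow> a = b \<and> a = c"
  by (auto simp: dpath_def)

lemma dpath_Cons:
  assumes "q \<noteq> []"
  shows "dpath V E w s t (v # q) a b \<longleftrightarrow>
    v = a \<and> (v, hd q) \<in> Darcs V E w s t \<and> dpath V E w s t q (hd q) b"
proof -
  obtain n where n: "length q = Suc n" using assms by (cases q) auto
  have "(\<forall>i<Suc n. ((v#q) ! i, (v#q) ! Suc i) \<in> Darcs V E w s t) \<longleftrightarrow>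
        (v, q ! 0) \<in> Darcs V E w s t \<and> (\<forall>i<n. (q ! i, q ! Suc i) \<in> Darcs V E w s t)"
    unfolding All_less_Suc2 by simp
  then show ?thesis using assms by (auto simp: dpath_def n hd_conv_nth)
qed

lemma dpath_append:
  "dpath V E w s t q a b \<Longrightarrow> dpath V E w s t r b c \<Longrightarrow> dpath V E w s t (q @ tl r) a c"
proof (induction q arbitrary: a)
  case Nil
  then show ?case by (simp add: dpath_def)
next
  case (Cons v q)
  have "r \<noteq> []" using Cons.prems by (simp add: dpath_def)
  show ?case
  proof (cases "q = []")
    case True
    then have "[v] @ tl r = r" "v = a" "v = b" using Cons.prems \<open>r \<noteq> []\<close>
      by (auto simp: dpath_def)
    then show ?thesis using Cons.prems True by simp
  next
    case False
    then have h: "v = a" "(v, hd q) \<in> Darcs V E w s t" "dpath V E w s t q (hd q) b"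
      using dpath_Cons[OF False, of V E w s t v a b] Cons.prems(1) by blast+
    then have "dpath V E w s t (q @ tl r) (hd q) c" using Cons.IH Cons.prems(2) by blast
    then show ?thesis using h False by (simp add: dpath_Cons)
  qed
qed

lemma dpath_if_trancl:
  "(a, b) \<in> (Darcs V E w s t)\<^sup>+ \<Longrightarrow> \<exists>q. dpath V E w s t q a b"
proof (induction rule: converse_trancl_induct)
  case (base y)
  then show ?case by (intro exI[of _ "[y, b]"]) (simp add: dpath_Cons)
next
  case (step y z)
  then obtain q where q: "dpath V E w s t q z b" by blast
  then have "q \<noteq> []" "hd q = z" by (auto simp: dpath_def)
  then show ?case using q step by (intro exI[of _ "y # q"]) (simp add: dpath_Cons)
qed

lemma dpath_nth_trancl:
  assumes "dpath V E w s t q a b" "i < j" "j < length q"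
  shows "(q ! i, q ! j) \<in> (Darcs V E w s t)\<^sup>+"
  using assms(2,3)
proof (induction j)
  case (Suc j)
  have "(q ! j, q ! Suc j) \<in> Darcs V E w s t"
    using assms(1) Suc.prems by (auto simp: dpath_def)
  then show ?case using Suc by (cases "i = j") auto
qed simp

lemma dpath_mem:
  assumes "dpath V E w s t q a b" "v \<in> set q"
  shows "v = a \<or> prec V E w s t a v" "v = b \<or> prec V E w s t v b"
proof -
  obtain k where k: "k < length q" "v = q ! k" using assms(2) by (auto simp: in_set_conv_nth)
  have a: "a = q ! 0" and b: "b = q ! (length q - 1)"
    using assms(1) by (auto simp: dpath_def hd_conv_nth last_conv_nth)
  show "v = a \<or> prec V E w s t a v"
    using k a dpath_nth_trancl[OF assms(1), of 0 k] by (cases k) (auto simp: prec_def)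
  show "v = b \<or> prec V E w s t v b"
    using k b dpath_nth_trancl[OF assms(1), of k "length q - 1"]
    by (cases "k = length q - 1") (auto simp: prec_def)
qed

locale st_graph =
  fixes V :: "'a set" and E :: "'a set set" and w :: "'a set \<Rightarrow> real" and s t :: 'a
  assumes connected: "connected_graph V E"
    and weights_pos: "\<forall>e\<in>E. w e > 0"
begin

abbreviation "d \<equiv> dist_G V E w"
abbreviation "ds \<equiv> dist_G V E w s"
abbreviation anc (infix "\<lessdot>" 50) where "a \<lessdot> b \<equiv> prec V E w s t a b"

lemma walk_len_nonneg: "walk V E p \<Longrightarrow> 0 \<le> walk_len w p"
  unfolding walk_len_def walk_def using weights_pos by (intro sum_nonneg) (auto intro: less_imp_le)

lemma dist_le_walk_len:
  assumes "walk V E p" shows "d (hd p) (last p) \<le> walk_len w p"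
  unfolding dist_G_def
proof (rule cInf_lower)
  show "walk_len w p \<in> {walk_len w q |q. walk V E q \<and> hd q = hd p \<and> last q = last p}"
    using assms by blast
  show "bdd_below {walk_len w q |q. walk V E q \<and> hd q = hd p \<and> last q = last p}"
    by (rule bdd_belowI[of _ 0]) (auto intro: walk_len_nonneg)
qed

lemma dist_greatest:
  assumes "x \<in> V" "y \<in> V"
    and "\<And>p. walk V E p \<Longrightarrow> hd p = x \<Longrightarrow> last p = y \<Longrightarrow> c \<le> walk_len w p"
  shows "c \<le> d x y"
  unfolding dist_G_def
proof (rule cInf_greatest)
  obtain p where "walk V E p" "hd p = x" "last p = y"
    using connected assms(1,2) unfolding connected_graph_def by blast
  then show "{walk_len w p |p. walk V E p \<and> hd p = x \<and> last p = y} \<noteq> {}" by blast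
qed (use assms(3) in blast)

lemma dist_triangle:
  assumes "x \<in> V" "y \<in> V" "z \<in> V"
  shows "d x z \<le> d x y + d y z"
proof -
  have bound: "d x z - walk_len w q \<le> d x y" if q: "walk V E q" "hd q = y" "last q = z" for q
  proof (rule dist_greatest[OF assms(1,2)])
    fix p assume p: "walk V E p" "hd p = x" "last p = y"
    show "d x z - walk_len w q \<le> walk_len w p"
      using dist_le_walk_len[of "p @ tl q"] walk_append(1,3,4)[OF p(1) q(1)]
        walk_append(2)[OF p(1) q(1), of w] p q by simp
  qed
  have "d x z - d x y \<le> d y z"
  proof (rule dist_greatest[OF assms(2,3)])
    fix q assume "walk V E q" "hd q = y" "last q = z"
    then show "d x z - d x y \<le> walk_len w q" using bound[of q] by linarith
  qed
  then show ?thesis by simp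
qed

lemma DV_subset_V: "v \<in> DV V E w s t \<Longrightarrow> v \<in> V"
  unfolding DV_def shortest_path_def walk_def by auto

text \<open>A prefix of a shortest \<open>st\<close>-path is a shortest path: replacing it by a shorter walk
  would shorten the whole path.\<close>

lemma dist_source_shortest_path_nth:
  assumes sp: "shortest_path V E w s t p" and i: "i < length p"
  shows "ds (p ! i) = walk_len w (take (Suc i) p)"
proof -
  have wp: "walk V E p" and "hd p = s" "last p = t" and len: "walk_len w p = d s t"
    using sp by (auto simp: shortest_path_def)
  have "p \<noteq> []" using wp by (simp add: walk_def)
  define P where "P = take (Suc i) p"
  define S where "S = drop i p"
  have wP: "walk V E P" unfolding P_def by (rule walk_take[OF wp]) simp
  have wS: "walk V E S" unfolding S_def by (rule walk_drop[OF wp i])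
  have hP: "hd P = s" using \<open>hd p = s\<close> \<open>p \<noteq> []\<close> by (simp add: P_def hd_take)
  have lP: "last P = p ! i" using i by (simp add: P_def take_Suc_conv_app_nth)
  have hS: "hd S = p ! i" using i by (simp add: S_def hd_drop_conv_nth)
  have lS: "last S = t" using i \<open>last p = t\<close> by (simp add: S_def)
  have "tl S = drop (Suc i) p" by (simp add: S_def drop_Suc tl_drop)
  then have "P @ tl S = p" by (simp add: P_def)
  moreover have "walk_len w (P @ tl S) = walk_len w P + walk_len w S"
    by (rule walk_append(2)[OF wP wS]) (simp add: lP hS)
  ultimately have split: "walk_len w p = walk_len w P + walk_len w S" by simp
  have "p ! i \<in> V" "s \<in> V" using wp i \<open>hd p = s\<close> \<open>p \<noteq> []\<close> unfolding walk_def
    by (auto simp: hd_conv_nth)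
  have "ds (p ! i) \<le> walk_len w P" using dist_le_walk_len[OF wP] hP lP by simp
  moreover have "walk_len w P \<le> ds (p ! i)"
  proof (rule dist_greatest[OF \<open>s \<in> V\<close> \<open>p ! i \<in> V\<close>])
    fix q assume q: "walk V E q" "hd q = s" "last q = p ! i"
    have "d s t \<le> walk_len w q + walk_len w S"
      using dist_le_walk_len[of "q @ tl S"] walk_append(1,3,4)[OF q(1) wS]
        walk_append(2)[OF q(1) wS, of w] q hS lS by simp
    then show "walk_len w P \<le> walk_len w q" using split len by simp
  qed
  ultimately show ?thesis unfolding P_def by simp
qed

lemma Darcs_dist_source:
  assumes "(a, b) \<in> Darcs V E w s t"
  shows "{a, b} \<in> E" "a \<in> DV V E w s t" "b \<in> DV V E w s t" "ds b = ds a + w {a, b}"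
proof -
  obtain p i where sp: "shortest_path V E w s t p" and i: "i < length p - 1"
    and ab: "a = p ! i" "b = p ! Suc i"
    using assms unfolding Darcs_def by blast
  show "{a, b} \<in> E" using sp i ab by (simp add: shortest_path_def walk_def)
  show "a \<in> DV V E w s t" "b \<in> DV V E w s t"
    unfolding DV_def using sp i ab by (auto intro!: nth_mem)
  have "ds b = (\<Sum>j<Suc i. w {p ! j, p ! Suc j})"
    using dist_source_shortest_path_nth[OF sp, of "Suc i"] walk_len_take[of "Suc i" p] i ab by simp
  moreover have "ds a = (\<Sum>j<i. w {p ! j, p ! Suc j})"
    using dist_source_shortest_path_nth[OF sp, of i] walk_len_take[of i p] i ab by simp
  ultimately show "ds b = ds a + w {a, b}" using ab by simp
qed

lemma dist_Darcs_le:
  assumes "(a, b) \<in> Darcs V E w s t"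
  shows "d a b \<le> w {a, b}" "0 < w {a, b}"
proof -
  have "walk V E [a, b]"
    using Darcs_dist_source[OF assms] DV_subset_V by (simp add: walk_Cons)
  then show "d a b \<le> w {a, b}" using dist_le_walk_len[of "[a, b]"] by (simp add: walk_len_Cons)
  show "0 < w {a, b}" using weights_pos Darcs_dist_source(1)[OF assms] by blast
qed

lemma prec_dist_source:
  assumes "a \<lessdot> b"
  shows "a \<in> DV V E w s t" "b \<in> DV V E w s t" "ds a < ds b" "d a b \<le> ds b - ds a"
proof -
  have "a \<in> DV V E w s t \<and> b \<in> DV V E w s t \<and> ds a < ds b \<and> d a b \<le> ds b - ds a"
    using assms unfolding prec_def
  proof (induction rule: trancl_induct)
    case (base b)
    then show ?case using Darcs_dist_source[OF base] dist_Darcs_le[OF base] by simp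
  next
    case (step b c)
    have "d a c \<le> d a b + d b c"
      using dist_triangle DV_subset_V step.IH Darcs_dist_source[OF step(2)] by blast
    then show ?case using step.IH Darcs_dist_source[OF step(2)] dist_Darcs_le[OF step(2)] by simp
  qed
  then show "a \<in> DV V E w s t" "b \<in> DV V E w s t" "ds a < ds b" "d a b \<le> ds b - ds a"
    by simp_all
qed

lemma DV_reachable:
  assumes "v \<in> DV V E w s t"
  shows "v = s \<or> s \<lessdot> v"
proof -
  obtain p where sp: "shortest_path V E w s t p" and v: "v \<in> set p"
    using assms unfolding DV_def by blast
  have "dpath V E w s t p s t"
    using sp unfolding dpath_def shortest_path_def walk_def Darcs_def by blast
  then show ?thesis by (rule dpath_mem(1)[OF _ v])
qed

lemma dpath_if_prec:
  assumes "a \<lessdot> b"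
  obtains q where "dpath V E w s t q a b"
  using dpath_if_trancl[OF assms[unfolded prec_def]] that by blast

lemma dpath_from_reachable:
  assumes "v = s \<or> s \<lessdot> v"
  obtains q where "dpath V E w s t q s v"
proof (cases "v = s")
  case True
  then show ?thesis using that[of "[s]"] by simp
next
  case False
  then show ?thesis using assms that dpath_if_prec by blast
qed

lemma dpath_from_source:
  assumes "v \<in> DV V E w s t"
  obtains q where "dpath V E w s t q s v"
  using dpath_from_reachable[OF DV_reachable[OF assms]] that .

lemma sdom_on_path_or_below:
  assumes "sdom V E w s t a y" "dpath V E w s t q s v" "dpath V E w s t r v y"
  shows "a \<in> set q \<or> v \<lessdot> a"
proof -
  have "dpath V E w s t (q @ tl r) s y" using dpath_append[OF assms(2,3)] .
  then have "a \<in> set (q @ tl r)" using assms(1) unfolding sdom_def by blast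
  then have "a \<in> set q \<or> a \<in> set r" by (cases r) auto
  moreover have "v \<in> set q" using assms(2) last_in_set by (auto simp: dpath_def)
  ultimately show ?thesis using dpath_mem(1)[OF assms(3)] by blast
qed

lemma dist_source_le_sdom:
  assumes "sdom V E w s t a y" "u \<lessdot> y" "\<not> a \<lessdot> u"
  shows "ds u \<le> ds a"
proof -
  obtain q where q: "dpath V E w s t q s u"
    by (rule dpath_from_source[OF prec_dist_source(1)[OF assms(2)]])
  obtain r where "dpath V E w s t r u y" using dpath_if_prec assms(2) by blast
  then have "a \<in> set q \<or> u \<lessdot> a" using sdom_on_path_or_below assms(1) q by blast
  moreover have "a = u" if "a \<in> set q" using dpath_mem(2)[OF q that] assms(3) by blast
  ultimately show ?thesis using prec_dist_source(3)[of u a] by fastforce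
qed

lemma sdom_reachable:
  assumes "sdom V E w s t a y" "y \<in> DV V E w s t"
  shows "a = s \<or> s \<lessdot> a"
proof -
  obtain q where q: "dpath V E w s t q s y" by (rule dpath_from_source[OF assms(2)])
  then have "a \<in> set q" using assms(1) by (auto simp: sdom_def)
  then show ?thesis using dpath_mem(1)[OF q] by blast
qed

lemma dist_source_sdom_less:
  assumes "sdom V E w s t a b" "b = s \<or> s \<lessdot> b"
  shows "ds a < ds b"
proof -
  obtain q where q: "dpath V E w s t q s b"
    by (rule dpath_from_reachable[OF assms(2)])
  then have "a \<in> set q" "a \<noteq> b" using assms(1) by (auto simp: sdom_def)
  then have "a \<lessdot> b" using dpath_mem(2)[OF q] by blast
  then show ?thesis by (rule prec_dist_source(3))
qed

lemma sdom_finite: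
  assumes "y \<in> DV V E w s t" "y \<noteq> s"
  shows "finite {v. sdom V E w s t v y}" "sdom V E w s t s y"
proof -
  obtain q where "dpath V E w s t q s y" by (rule dpath_from_source[OF assms(1)])
  then have "{v. sdom V E w s t v y} \<subseteq> set q" unfolding sdom_def by blast
  then show "finite {v. sdom V E w s t v y}" by (rule finite_subset) simp
  have "s \<in> set q" if "dpath V E w s t q s y" for q
    using that hd_in_set unfolding dpath_def by blast
  then show "sdom V E w s t s y" unfolding sdom_def using assms(2) by blast
qed

lemma sdom_farthest_immediate:
  assumes y: "y \<in> DV V E w s t" and v: "sdom V E w s t v y"
    and farthest: "\<And>u. sdom V E w s t u y \<Longrightarrow> ds u \<le> ds v"
    and u: "sdom V E w s t u y" "u \<noteq> v"
  shows "sdom V E w s t u v"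
  unfolding sdom_def
proof (intro conjI allI impI)
  show "u \<noteq> v" by fact
  obtain p where p: "dpath V E w s t p s y" by (rule dpath_from_source[OF y])
  have "v \<in> set p" "v \<noteq> y" using v p by (auto simp: sdom_def)
  then have "v \<lessdot> y" using dpath_mem(2)[OF p] by blast
  then obtain r where r: "dpath V E w s t r v y" by (rule dpath_if_prec)
  fix q assume "dpath V E w s t q s v"
  then have "u \<in> set q \<or> v \<lessdot> u" using sdom_on_path_or_below u(1) r by blast
  moreover have "\<not> v \<lessdot> u" using farthest[OF u(1)] prec_dist_source(3)[of v u] by auto
  ultimately show "u \<in> set q" by blast
qed

lemma Is_sdom:
  assumes "y \<in> DV V E w s t" "y \<noteq> s"
  shows "sdom V E w s t (Is V E w s t y) y"
proof -
  define Dom where "Dom = {v. sdom V E w s t v y}"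
  have "finite (ds ` Dom)" "s \<in> Dom" using sdom_finite[OF assms] by (auto simp: Dom_def)
  then have "Max (ds ` Dom) \<in> ds ` Dom" by (intro Max_in) auto
  then obtain v where "v \<in> Dom" and v_max: "ds v = Max (ds ` Dom)" by auto
  then have v: "sdom V E w s t v y" by (simp add: Dom_def)
  have farthest: "ds u \<le> ds v" if "sdom V E w s t u y" for u
    using \<open>finite (ds ` Dom)\<close> that v_max by (simp add: Dom_def)
  have immediate: "\<forall>u. sdom V E w s t u y \<and> u \<noteq> v \<longrightarrow> sdom V E w s t u v"
    using sdom_farthest_immediate[OF assms(1) v farthest] by blast
  have unique: "v' = v" if "sdom V E w s t v' y"
      "\<forall>u. sdom V E w s t u y \<and> u \<noteq> v' \<longrightarrow> sdom V E w s t u v'" for v'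
  proof (rule ccontr)
    assume "v' \<noteq> v"
    then have "sdom V E w s t v v'" using that(2) v by blast
    moreover have "v' = s \<or> s \<lessdot> v'" using sdom_reachable[OF that(1) assms(1)] .
    ultimately have "ds v < ds v'" by (rule dist_source_sdom_less)
    then show False using farthest[OF that(1)] by linarith
  qed
  have "Is V E w s t y = v"
    unfolding Is_def by (rule the_equality) (use v immediate unique in blast)+
  then show ?thesis using v by simp
qed

lemma gfun_finite:
  assumes "gfun V E w s t x z \<noteq> \<infinity>"
  shows "z \<in> Cset V E w s t x" "x \<lessdot> It V E w s t z" "gfun V E w s t x z = ereal (d z x)"
  using assms by (auto simp: gfun_def split: if_splits)

lemma gstar_le_dist_source_diff:
  assumes "gfun V E w s t y z \<noteq> \<infinity>"
  shows "gstar V E w s t y \<le> ereal (ds y - ds z)"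
proof -
  have "z \<lessdot> y" using gfun_finite(1)[OF assms] by (simp add: Cset_def)
  then have "gstar V E w s t y \<le> gfun V E w s t y z"
    unfolding gstar_def by (intro INF_lower prec_dist_source(1))
  also have "\<dots> = ereal (d z y)" using gfun_finite(3)[OF assms] .
  also have "\<dots> \<le> ereal (ds y - ds z)" using prec_dist_source(4)[OF \<open>z \<lessdot> y\<close>] by simp
  finally show ?thesis .
qed

end

lemma gfun_finite_if_gstar_finite:
  assumes "gstar V E w s t y \<noteq> \<infinity>"
  obtains z where "z \<in> DV V E w s t" "gfun V E w s t y z \<noteq> \<infinity>"
proof -
  have "\<not> (\<forall>z\<in>DV V E w s t. gfun V E w s t y z = \<infinity>)"
  proof
    assume "\<forall>z\<in>DV V E w s t. gfun V E w s t y z = \<infinity>"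
    then have "gstar V E w s t y = \<infinity>" unfolding gstar_def top_ereal_def[symmetric] by simp
    with assms show False ..
  qed
  then show ?thesis using that by blast
qed

theorem lemma7:
  fixes V :: "'a set" and E :: "'a set set" and w :: "'a set \<Rightarrow> real" and s t x y :: 'a
  assumes "simple_graph V E" and "connected_graph V E"
    and "\<forall>e\<in>E. w e > 0"
    and "s \<in> V" and "t \<in> V"
    and "x \<in> DV V E w s t" and "y \<in> DV V E w s t"
    and "prec V E w s t y x"
    and "y \<in> Fset V E w s t"
  shows "\<forall>u. prec V E w s t u y \<longrightarrow> gfun V E w s t x u > gstar V E w s t y"
proof (intro allI impI)
  interpret st_graph V E w s t using assms(2,3) by unfold_locales
  fix u assume "u \<lessdot> y"
  have "y \<noteq> s" and gstar_fin: "gstar V E w s t y \<noteq> \<infinity>" using assms(9) by (auto simp: Fset_def)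
  show "gfun V E w s t x u > gstar V E w s t y"
  proof (cases "gfun V E w s t x u = \<infinity>")
    case True
    then show ?thesis using gstar_fin by (simp add: less_top[symmetric])
  next
    case gx_fin: False
    have bound: "gstar V E w s t y \<le> ereal (ds y - ds u)"
    proof (cases "gfun V E w s t y u = \<infinity>")
      case True
      have "y \<lessdot> It V E w s t u"
        using gfun_finite(2)[OF gx_fin] assms(8) unfolding prec_def by simp
      then have "\<not> Is V E w s t y \<lessdot> u" using True \<open>u \<lessdot> y\<close> by (simp add: gfun_def Cset_def split: if_splits)
      then have "ds u \<le> ds (Is V E w s t y)"
        by (rule dist_source_le_sdom[OF Is_sdom[OF assms(7) \<open>y \<noteq> s\<close>] \<open>u \<lessdot> y\<close>])
      obtain z where z: "gfun V E w s t y z \<noteq> \<infinity>"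
        by (rule gfun_finite_if_gstar_finite[OF gstar_fin])
      then have "Is V E w s t y \<lessdot> z" using gfun_finite(1)[OF z] by (simp add: Cset_def)
      then have "ds u < ds z"
        using \<open>ds u \<le> ds (Is V E w s t y)\<close> prec_dist_source(3)[of "Is V E w s t y" z] by simp
      have "gstar V E w s t y \<le> ereal (ds y - ds z)" by (rule gstar_le_dist_source_diff[OF z])
      also have "\<dots> \<le> ereal (ds y - ds u)" using \<open>ds u < ds z\<close> by simp
      finally show ?thesis .
    qed (rule gstar_le_dist_source_diff)
    have "ds y - ds u < d u x"
      using dist_triangle[of s u x] prec_dist_source[OF \<open>u \<lessdot> y\<close>] prec_dist_source[OF assms(8)]
        DV_subset_V assms(4) by simp
    then have "ereal (ds y - ds u) < gfun V E w s t x u" using gfun_finite(3)[OF gx_fin] by simp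
    with bound show ?thesis by (rule order_le_less_trans)
  qed
qed

end
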